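(* Let $z\neq 0,1$ be a fixed complex constant. The function \[ F_0(k,a,b) = z^{b+k}(z-1)^{a-b}\,\frac{\Gamma(a+k)}{\Gamma(b+k)}\,\Gamma(b-a) \] is a WZ seed in the variables $a,b$.
   Context: A term $F(n_1,\dots,n_r)$ is hypergeometric in $n_1,\dots,n_r$ if each ratio $F(\dots,n_i+1,\dots)/F(\dots,n_i,\dots)$ is a rational function of $n_1,\dots,n_r$. Write $\Delta_n f(n)=f(n+1)-f(n)$. Two hypergeometric terms $F(n,k),G(n,k)$ form a WZ pair, and $G$ is called a WZ mate of $F$, if $\Delta_n F(n,k)=\Delta_k G(n,k)$. A hypergeometric term $F_0(k,a,b,\dots)$ (hypergeometric in $k,a,b,\dots$) is a WZ seed in the variables $a,b,\dots$ if for all integers $K,A,B,\dots$ and all complex $k_0$ and all values of the parameters $a,b,\dots$, the term $F(n,k)=F_0(Kn+k_0+k,\,An+a,\,Bn+b,\dots)$ has a WZ mate $G(n,k)$ (a hypergeometric term). Factors such as $(-1)^x$ or $z^x$ with non-integer exponent $x$ are understood as hypergeometric factors satisfying $(-1)^{x+1}=-(-1)^x$, $z^{x+1}=z\cdot z^x$ (e.g. defined via a fixed branch of the exponential). *)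

theory Defs
  imports "HOL-Analysis.Analysis" "HOL-Computational_Algebra.Polynomial"
begin

text \<open>Bivariate polynomials over the complex numbers, represented as
  univariate polynomials (in the second variable) whose coefficients are
  univariate polynomials (in the first variable).  A bivariate rational
  function is a quotient of two such polynomials.\<close>

definition beval :: "complex poly poly \<Rightarrow> complex \<Rightarrow> complex \<Rightarrow> complex" where
  "beval P x y = poly (poly P [:y:]) x"

text \<open>The term F0(k,a,b) = z^(b+k) (z-1)^(a-b) Gamma(a+k)/Gamma(b+k) Gamma(b-a),
  where z^x = exp(x Lz) and (z-1)^x = exp(x Lz1) for fixed logarithms
  Lz of z and Lz1 of z-1 (fixed branches).\<close>

definition F0 :: "complex \<Rightarrow> complex \<Rightarrow> complex \<Rightarrow> complex \<Rightarrow> complex \<Rightarrow> complex" where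
  "F0 Lz Lz1 k a b =
     exp ((b + k) * Lz) * exp ((a - b) * Lz1) * Gamma (a + k) / Gamma (b + k) * Gamma (b - a)"

definition wz_mate :: "(int \<Rightarrow> int \<Rightarrow> complex) \<Rightarrow> (int \<Rightarrow> int \<Rightarrow> complex)
    \<Rightarrow> (int \<Rightarrow> int \<Rightarrow> bool) \<Rightarrow> bool" where
  "wz_mate F G Bad \<longleftrightarrow>
     (\<exists>D p1 q1 p2 q2. D \<noteq> 0 \<and> q1 \<noteq> 0 \<and> q2 \<noteq> 0 \<and>
        (\<forall>n k. beval D (of_int n) (of_int k) \<noteq> 0 \<and> \<not> Bad n k \<longrightarrow>
            F (n + 1) k - F n k = G n (k + 1) - G n k \<and>
            beval q1 (of_int n) (of_int k) * G (n + 1) k = beval p1 (of_int n) (of_int k) * G n k \<and>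
            beval q2 (of_int n) (of_int k) * G n (k + 1) = beval p2 (of_int n) (of_int k) * G n k))"

text \<open>Points (n,k) at which one of the Gamma factors of F(n',k') for
  n' in {n,n+1}, k' in {k,k+1} has its argument at a pole (nonpositive integer);
  there F itself is undefined.\<close>

definition seed_bad :: "int \<Rightarrow> int \<Rightarrow> int \<Rightarrow> complex \<Rightarrow> complex \<Rightarrow> complex \<Rightarrow> int \<Rightarrow> int \<Rightarrow> bool" where
  "seed_bad K A B k0 a b n k \<longleftrightarrow>
     (\<exists>i\<in>{0,1::int}. \<exists>j\<in>{0,1::int}.
        let kk = of_int (K * (n + i)) + k0 + of_int (k + j);
            aa = of_int (A * (n + i)) + a;
            bb = of_int (B * (n + i)) + b
        in aa + kk \<in> \<int>\<^sub>\<le>\<^sub>0 \<or> bb + kk \<in> \<int>\<^sub>\<le>\<^sub>0 \<or> bb - aa \<in> \<int>\<^sub>\<le>\<^sub>0)"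

end

theory Submission
  imports Defs
begin

(* With u = a + k and d = b - a the seed is the kernel
     H(u, d) = z^(u+d) (z-1)^(-d) Gamma(u) Gamma(d) / Gamma(u+d),
   which satisfies the contiguous relation (z - 1) H(u, d+1) = z H(u, d) - H(u+1, d).
   Writing E for the shift u -> u+1, shifting d is therefore the operator X(E) with
   X(t) = (z - t)/(z - 1), and every shift H(u+i, d+j) equals (t^i X(t)^j)(E) H(u, d).
   The specialisation F(n, k) moves (u, d) by (K+A, B-A) in n and by (1, 0) in k, so
   F(n+1, k) - F(n, k) = P(E) H at a suitable base point, where P(1) = 0 because X(1) = 1.
   With P = (t - 1) Q the term G = Q(E) H satisfies Delta_n F = Delta_k G.
   G is hypergeometric: (u+d)_L E^j H / H is a polynomial in (u, d) for j <= L = deg Q,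
   and (u, d) depend affinely on (n, k). *)

lemma plus_of_nat_notin_nonpos_Ints:
  "(x :: 'a :: ring_char_0) \<notin> \<int>\<^sub>\<le>\<^sub>0 \<Longrightarrow> x + of_nat m \<notin> \<int>\<^sub>\<le>\<^sub>0"
  using nonpos_Ints_diff_Nats[of "x + of_nat m" "of_nat m"] by auto

lemma plus_of_int_notin_nonpos_Ints_pochhammer:
  assumes "(x :: 'a :: field_char_0) \<notin> \<int>\<^sub>\<le>\<^sub>0" and "pochhammer (x + of_int M) (nat (- M)) \<noteq> 0"
  shows "x + of_int M \<notin> \<int>\<^sub>\<le>\<^sub>0"
proof (cases "M \<ge> 0")
  case True
  then show ?thesis
    using plus_of_nat_notin_nonpos_Ints[OF assms(1), of "nat M"] by simp
next
  case False
  define m where "m = nat (- M)"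
  have x_eq: "x = x + of_int M + of_nat m" using False by (simp add: m_def)
  show ?thesis
  proof
    assume "x + of_int M \<in> \<int>\<^sub>\<le>\<^sub>0"
    then obtain j where j: "x + of_int M = - of_nat j" by (elim nonpos_Ints_cases')
    show False
    proof (cases "j < m")
      case True
      then show False using assms(2) j by (auto simp: m_def pochhammer_eq_0_iff)
    next
      case False
      then have "x = - of_nat (j - m)" using x_eq j by (simp add: of_nat_diff)
      then show False using assms(1) by simp
    qed
  qed
qed

lemma pochhammer_1_nonzero: "pochhammer (1 :: complex) m \<noteq> 0"
  by (simp flip: pochhammer_fact)

lemma Gamma_plus_of_int:
  assumes "(x :: 'a :: Gamma) \<notin> \<int>\<^sub>\<le>\<^sub>0" "x + of_int M \<notin> \<int>\<^sub>\<le>\<^sub>0"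
  shows "Gamma (x + of_int M) * pochhammer (x + of_int M) (nat (- M)) = Gamma x * pochhammer x (nat M)"
proof (cases "M \<ge> 0")
  case True
  then have "x + of_int M = x + of_nat (nat M)" by simp
  then show ?thesis
    using True pochhammer_Gamma[OF assms(1), of "nat M"] assms(1) by (simp add: Gamma_eq_zero_iff field_simps)
next
  case False
  then have "x = x + of_int M + of_nat (nat (- M))" by simp
  then have "Gamma x = pochhammer (x + of_int M) (nat (- M)) * Gamma (x + of_int M)"
    using pochhammer_Gamma[OF assms(2), of "nat (- M)"] assms(2) by (simp add: Gamma_eq_zero_iff field_simps)
  then show ?thesis using False by simp
qed

lemma rGamma_plus_of_int:
  "rGamma ((x :: 'a :: Gamma) + of_int M) * pochhammer x (nat M) = rGamma x * pochhammer (x + of_int M) (nat (- M))"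
proof (cases "M \<ge> 0")
  case True
  then have "x + of_int M = x + of_nat (nat M)" by simp
  then show ?thesis using True pochhammer_rGamma[of x "nat M"] by (simp add: ac_simps)
next
  case False
  then have x_eq: "x + of_int M + of_nat (nat (- M)) = x" by simp
  have "rGamma (x + of_int M) = pochhammer (x + of_int M) (nat (- M)) * rGamma x"
    using pochhammer_rGamma[of "x + of_int M" "nat (- M)"] unfolding x_eq .
  then show ?thesis using False by simp
qed

section \<open>The kernel and its contiguous relation\<close>

definition beta_kernel :: "complex \<Rightarrow> complex \<Rightarrow> complex \<Rightarrow> complex \<Rightarrow> complex" where
  "beta_kernel Lz Lz1 u d = exp ((u + d) * Lz) * exp (- d * Lz1) * Gamma u * rGamma (u + d) * Gamma d"

lemma F0_eq_beta_kernel: "F0 Lz Lz1 k a b = beta_kernel Lz Lz1 (a + k) (b - a)"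
proof -
  have "(a + k) + (b - a) = b + k" "- (b - a) = a - b" by simp_all
  then show ?thesis
    unfolding F0_def beta_kernel_def by (simp only:) (simp add: divide_inverse rGamma_inverse_Gamma)
qed

lemma beta_kernel_contiguous:
  assumes "exp Lz = z" "exp Lz1 = z - 1" "z \<noteq> 1" "u \<notin> \<int>\<^sub>\<le>\<^sub>0" "d \<notin> \<int>\<^sub>\<le>\<^sub>0"
  shows "beta_kernel Lz Lz1 u (d + 1)
           = z / (z - 1) * beta_kernel Lz Lz1 u d - 1 / (z - 1) * beta_kernel Lz Lz1 (u + 1) d"
proof -
  define P where "P = exp ((u + d) * Lz) * exp (- d * Lz1) * Gamma u * rGamma (u + d + 1) * Gamma d"
  have exp_z: "exp ((u + d + 1) * Lz) = exp ((u + d) * Lz) * z"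
    using assms(1) by (simp add: distrib_right exp_add)
  have "- (d + 1) * Lz1 = - d * Lz1 - Lz1" by (simp add: algebra_simps)
  then have exp_z1: "exp (- (d + 1) * Lz1) = exp (- d * Lz1) / (z - 1)"
    using assms(2) by (simp add: exp_diff)
  have shift_d: "beta_kernel Lz Lz1 u (d + 1) = P * z * d / (z - 1)"
    using Gamma_plus1[OF assms(5)] exp_z exp_z1
    by (simp add: beta_kernel_def P_def add.assoc add.left_commute[of u 1])
  have no_shift: "beta_kernel Lz Lz1 u d = P * (u + d)"
    by (simp add: beta_kernel_def P_def flip: rGamma_plus1[of "u + d"])
  have shift_u: "beta_kernel Lz Lz1 (u + 1) d = P * z * u"
    using Gamma_plus1[OF assms(4)] exp_z
    by (simp add: beta_kernel_def P_def add.commute add.left_commute)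
  have "z / (z - 1) * (P * (u + d)) - 1 / (z - 1) * (P * z * u) = (z * (P * (u + d)) - P * z * u) / (z - 1)"
    by (simp add: diff_divide_distrib)
  also have "z * (P * (u + d)) - P * z * u = P * z * d" by (simp add: algebra_simps)
  finally show ?thesis unfolding shift_d no_shift shift_u by simp
qed

lemma beta_kernel_shift_nat:
  assumes "exp Lz = z" "u \<notin> \<int>\<^sub>\<le>\<^sub>0" "j \<le> L"
  shows "beta_kernel Lz Lz1 (u + of_nat j) d * pochhammer (u + d) L
       = beta_kernel Lz Lz1 u d * z ^ j * pochhammer u j * pochhammer (u + d + of_nat j) (L - j)"
proof -
  have "exp ((u + d + of_nat j) * Lz) = exp ((u + d) * Lz) * exp (of_nat j * Lz)"
    by (simp add: distrib_right exp_add)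
  also have "exp (of_nat j * Lz) = z ^ j"
    using assms(1) by (simp add: exp_of_nat_mult)
  finally have exp_z: "exp ((u + d + of_nat j) * Lz) = exp ((u + d) * Lz) * z ^ j" .
  have Gamma_u: "Gamma (u + of_nat j) = pochhammer u j * Gamma u"
    using pochhammer_Gamma[OF assms(2), of j] assms(2) by (simp add: Gamma_eq_zero_iff field_simps)
  have poch: "pochhammer (u + d) L = pochhammer (u + d) j * pochhammer (u + d + of_nat j) (L - j)"
    using pochhammer_product'[of "u + d" j "L - j"] assms(3) by simp
  have sum_eq: "u + of_nat j + d = u + d + of_nat j" by simp
  show ?thesis
    unfolding beta_kernel_def sum_eq pochhammer_rGamma[of "u + d" j] exp_z Gamma_u poch
    by (simp only: ac_simps)
qed

lemma beta_kernel_shift_int: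
  assumes "u \<notin> \<int>\<^sub>\<le>\<^sub>0" "u + of_int M \<notin> \<int>\<^sub>\<le>\<^sub>0" "d \<notin> \<int>\<^sub>\<le>\<^sub>0" "d + of_int N \<notin> \<int>\<^sub>\<le>\<^sub>0"
  shows "beta_kernel Lz Lz1 (u + of_int M) (d + of_int N) *
           (pochhammer (u + of_int M) (nat (- M)) * pochhammer (d + of_int N) (nat (- N))
            * pochhammer (u + d) (nat (M + N)))
       = beta_kernel Lz Lz1 u d * (exp (of_int (M + N) * Lz) * exp (- of_int N * Lz1) *
           pochhammer u (nat M) * pochhammer d (nat N) * pochhammer (u + d + of_int (M + N)) (nat (- (M + N))))"
proof -
  have sum_eq: "u + of_int M + (d + of_int N) = u + d + of_int (M + N)" by simp
  have exp_z: "exp ((u + d + of_int (M + N)) * Lz) = exp ((u + d) * Lz) * exp (of_int (M + N) * Lz)"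
    by (simp add: distrib_right exp_add)
  have exp_z1: "exp (- (d + of_int N) * Lz1) = exp (- d * Lz1) * exp (- of_int N * Lz1)"
    by (simp add: algebra_simps flip: exp_add)
  let ?E = "exp ((u + d) * Lz) * exp (of_int (M + N) * Lz) * exp (- d * Lz1) * exp (- of_int N * Lz1)"
  have "beta_kernel Lz Lz1 (u + of_int M) (d + of_int N) *
           (pochhammer (u + of_int M) (nat (- M)) * pochhammer (d + of_int N) (nat (- N))
            * pochhammer (u + d) (nat (M + N)))
      = ?E * (Gamma (u + of_int M) * pochhammer (u + of_int M) (nat (- M)))
           * (Gamma (d + of_int N) * pochhammer (d + of_int N) (nat (- N)))
           * (rGamma (u + d + of_int (M + N)) * pochhammer (u + d) (nat (M + N)))"
    unfolding beta_kernel_def sum_eq exp_z exp_z1 by (simp only: mult_ac)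
  also have "\<dots> = ?E * (Gamma u * pochhammer u (nat M)) * (Gamma d * pochhammer d (nat N))
           * (rGamma (u + d) * pochhammer (u + d + of_int (M + N)) (nat (- (M + N))))"
    by (simp only: Gamma_plus_of_int[OF assms(1,2)] Gamma_plus_of_int[OF assms(3,4)] rGamma_plus_of_int)
  also have "\<dots> = beta_kernel Lz Lz1 u d * (exp (of_int (M + N) * Lz) * exp (- of_int N * Lz1) *
           pochhammer u (nat M) * pochhammer d (nat N) * pochhammer (u + d + of_int (M + N)) (nat (- (M + N))))"
    unfolding beta_kernel_def by (simp only: mult_ac)
  finally show ?thesis .
qed

section \<open>Polynomials in the shift operator\<close>

(* beta_shift Lz Lz1 p u d is p(E) applied to the kernel at (u, d), E being the shift u -> u + 1. *)

definition beta_shift :: "complex \<Rightarrow> complex \<Rightarrow> complex poly \<Rightarrow> complex \<Rightarrow> complex \<Rightarrow> complex" where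
  "beta_shift Lz Lz1 p u d = (\<Sum>j\<le>degree p. coeff p j * beta_kernel Lz Lz1 (u + of_nat j) d)"

lemma beta_shift_conv_sum:
  assumes "degree p \<le> m"
  shows "beta_shift Lz Lz1 p u d = (\<Sum>j\<le>m. coeff p j * beta_kernel Lz Lz1 (u + of_nat j) d)"
  unfolding beta_shift_def
  by (rule sum.mono_neutral_left) (use assms in \<open>auto simp: coeff_eq_0 not_le\<close>)

lemma beta_shift_add:
  "beta_shift Lz Lz1 (p + q) u d = beta_shift Lz Lz1 p u d + beta_shift Lz Lz1 q u d"
  using degree_add_le_max[of p q]
  by (simp add: beta_shift_conv_sum[where m = "max (degree p) (degree q)"] algebra_simps sum.distrib)

lemma beta_shift_diff:
  "beta_shift Lz Lz1 (p - q) u d = beta_shift Lz Lz1 p u d - beta_shift Lz Lz1 q u d"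
  using degree_diff_le_max[of p q]
  by (simp add: beta_shift_conv_sum[where m = "max (degree p) (degree q)"] algebra_simps sum_subtractf)

lemma beta_shift_smult: "beta_shift Lz Lz1 (smult c p) u d = c * beta_shift Lz Lz1 p u d"
  using degree_smult_le[of c p]
  by (simp add: beta_shift_conv_sum[where m = "degree p"] sum_distrib_left ac_simps)

lemma beta_shift_pCons_0: "beta_shift Lz Lz1 (pCons 0 p) u d = beta_shift Lz Lz1 p (u + 1) d"
proof -
  have "beta_shift Lz Lz1 (pCons 0 p) u d
      = (\<Sum>j\<le>Suc (degree p). coeff (pCons 0 p) j * beta_kernel Lz Lz1 (u + of_nat j) d)"
    by (rule beta_shift_conv_sum) (simp add: degree_pCons_le)
  also have "\<dots> = (\<Sum>j\<le>degree p. coeff p j * beta_kernel Lz Lz1 (u + 1 + of_nat j) d)"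
    by (subst sum.atMost_Suc_shift) (simp add: ac_simps)
  finally show ?thesis by (simp add: beta_shift_def)
qed

lemma beta_shift_monom: "beta_shift Lz Lz1 (monom c i) u d = c * beta_kernel Lz Lz1 (u + of_nat i) d"
  using degree_monom_le[of c i]
  by (simp add: beta_shift_conv_sum[where m = i] coeff_monom mult_delta_left sum.delta)

lemma beta_shift_mult_linear:
  "beta_shift Lz Lz1 (p * [:a, b:]) u d = a * beta_shift Lz Lz1 p u d + b * beta_shift Lz Lz1 p (u + 1) d"
  by (simp add: mult_pCons_right beta_shift_add beta_shift_smult beta_shift_pCons_0)

(* Shifting d by one acts on the kernel as contiguous_poly z evaluated at E. *)

definition contiguous_poly :: "complex \<Rightarrow> complex poly" where
  "contiguous_poly z = [:z / (z - 1), - 1 / (z - 1):]"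

lemma poly_contiguous_poly_1: "z \<noteq> 1 \<Longrightarrow> poly (contiguous_poly z) 1 = 1"
  by (simp add: contiguous_poly_def diff_divide_distrib[symmetric])

lemma beta_shift_monom_contiguous_power:
  assumes "exp Lz = z" "exp Lz1 = z - 1" "z \<noteq> 1" "u \<notin> \<int>\<^sub>\<le>\<^sub>0" "d \<notin> \<int>\<^sub>\<le>\<^sub>0"
  shows "beta_shift Lz Lz1 (monom 1 i * contiguous_poly z ^ t) u d
           = beta_kernel Lz Lz1 (u + of_nat i) (d + of_nat t)"
  using assms(4)
proof (induction t arbitrary: u)
  case 0
  then show ?case by (simp add: beta_shift_monom)
next
  case (Suc t)
  have u_i: "u + of_nat i \<notin> \<int>\<^sub>\<le>\<^sub>0" and d_t: "d + of_nat t \<notin> \<int>\<^sub>\<le>\<^sub>0"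
    using plus_of_nat_notin_nonpos_Ints Suc.prems assms(5) by blast+
  have "u + 1 \<notin> \<int>\<^sub>\<le>\<^sub>0"
    using plus_of_nat_notin_nonpos_Ints[OF Suc.prems, of 1] by simp
  have "monom 1 i * contiguous_poly z ^ Suc t
      = (monom 1 i * contiguous_poly z ^ t) * [:z / (z - 1), - 1 / (z - 1):]"
    by (simp only: contiguous_poly_def power_Suc2 mult.assoc)
  then have "beta_shift Lz Lz1 (monom 1 i * contiguous_poly z ^ Suc t) u d
      = z / (z - 1) * beta_kernel Lz Lz1 (u + of_nat i) (d + of_nat t)
        - 1 / (z - 1) * beta_kernel Lz Lz1 (u + 1 + of_nat i) (d + of_nat t)"
    by (simp only: beta_shift_mult_linear Suc.IH[OF Suc.prems] Suc.IH[OF \<open>u + 1 \<notin> \<int>\<^sub>\<le>\<^sub>0\<close>])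
      simp
  also have "\<dots> = beta_kernel Lz Lz1 (u + of_nat i) (d + of_nat (Suc t))"
    using beta_kernel_contiguous[OF assms(1-3) u_i d_t] by (simp add: ac_simps)
  finally show ?case .
qed

lemma beta_shift_telescoping:
  assumes "poly p 1 = 0"
  defines "q \<equiv> p div [:-1, 1:]"
  shows "beta_shift Lz Lz1 p u d = beta_shift Lz Lz1 q (u + 1) d - beta_shift Lz Lz1 q u d"
proof -
  have "[:-1, 1:] dvd p" using assms(1) by (simp add: poly_eq_0_iff_dvd)
  then have "p = q * [:-1, 1:]" unfolding q_def by (simp only: dvd_div_mult_self)
  then show ?thesis by (simp add: beta_shift_diff beta_shift_pCons_0)
qed

lemma beta_kernel_shift_diff_telescopes:
  fixes i j i' j' :: nat
  assumes "exp Lz = z" "exp Lz1 = z - 1" "z \<noteq> 1" "u \<notin> \<int>\<^sub>\<le>\<^sub>0" "d \<notin> \<int>\<^sub>\<le>\<^sub>0"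
  defines "Q \<equiv> (monom 1 i * contiguous_poly z ^ j - monom 1 i' * contiguous_poly z ^ j') div [:-1, 1:]"
  shows "beta_kernel Lz Lz1 (u + of_nat i) (d + of_nat j) - beta_kernel Lz Lz1 (u + of_nat i') (d + of_nat j')
           = beta_shift Lz Lz1 Q (u + 1) d - beta_shift Lz Lz1 Q u d"
proof -
  let ?P = "monom 1 i * contiguous_poly z ^ j - monom 1 i' * contiguous_poly z ^ j'"
  have "beta_kernel Lz Lz1 (u + of_nat i) (d + of_nat j) - beta_kernel Lz Lz1 (u + of_nat i') (d + of_nat j')
      = beta_shift Lz Lz1 ?P u d"
    by (simp add: beta_shift_diff beta_shift_monom_contiguous_power[OF assms(1-5)])
  also have "\<dots> = beta_shift Lz Lz1 Q (u + 1) d - beta_shift Lz Lz1 Q u d"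
    unfolding Q_def using assms(3) by (intro beta_shift_telescoping) (simp add: poly_monom poly_contiguous_poly_1)
  finally show ?thesis .
qed

definition beta_shift_factor :: "complex \<Rightarrow> complex poly \<Rightarrow> complex \<Rightarrow> complex \<Rightarrow> complex" where
  "beta_shift_factor z q u d = (\<Sum>j\<le>degree q.
     coeff q j * z ^ j * pochhammer u j * pochhammer (u + d + of_nat j) (degree q - j))"

lemma beta_shift_closed_form:
  assumes "exp Lz = z" "u \<notin> \<int>\<^sub>\<le>\<^sub>0"
  shows "beta_shift Lz Lz1 q u d * pochhammer (u + d) (degree q)
           = beta_kernel Lz Lz1 u d * beta_shift_factor z q u d"
proof -
  have "beta_shift Lz Lz1 q u d * pochhammer (u + d) (degree q)
      = (\<Sum>j\<le>degree q. coeff q j * (beta_kernel Lz Lz1 (u + of_nat j) d * pochhammer (u + d) (degree q)))"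
    unfolding beta_shift_def sum_distrib_right by (simp add: mult.assoc)
  also have "\<dots> = (\<Sum>j\<le>degree q. coeff q j * (beta_kernel Lz Lz1 u d * z ^ j * pochhammer u j
                      * pochhammer (u + d + of_nat j) (degree q - j)))"
    by (rule sum.cong[OF refl]) (simp add: beta_kernel_shift_nat[OF assms])
  also have "\<dots> = beta_kernel Lz Lz1 u d * beta_shift_factor z q u d"
    unfolding beta_shift_factor_def sum_distrib_left by (rule sum.cong[OF refl]) (simp add: ac_simps)
  finally show ?thesis .
qed

lemma beval_0 [simp]: "beval 0 x y = 0"
  by (simp add: beval_def)

lemma beval_add: "beval (P + Q) x y = beval P x y + beval Q x y"
  by (simp add: beval_def)

lemma beval_mult: "beval (P * Q) x y = beval P x y * beval Q x y"
  by (simp add: beval_def)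

definition bipoly_fun :: "(complex \<Rightarrow> complex \<Rightarrow> complex) \<Rightarrow> bool" where
  "bipoly_fun f \<longleftrightarrow> (\<exists>P. \<forall>x y. beval P x y = f x y)"

lemma bipoly_fun_const: "bipoly_fun (\<lambda>x y. c)"
  unfolding bipoly_fun_def by (rule exI[of _ "[:[:c:]:]"]) (simp add: beval_def)

lemma bipoly_fun_fst: "bipoly_fun (\<lambda>x y. x)"
  unfolding bipoly_fun_def by (rule exI[of _ "[:[:0, 1:]:]"]) (simp add: beval_def)

lemma bipoly_fun_snd: "bipoly_fun (\<lambda>x y. y)"
  unfolding bipoly_fun_def by (rule exI[of _ "[:0, 1:]"]) (simp add: beval_def)

lemma bipoly_fun_add: "bipoly_fun f \<Longrightarrow> bipoly_fun g \<Longrightarrow> bipoly_fun (\<lambda>x y. f x y + g x y)"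
  unfolding bipoly_fun_def by (metis beval_add)

lemma bipoly_fun_mult: "bipoly_fun f \<Longrightarrow> bipoly_fun g \<Longrightarrow> bipoly_fun (\<lambda>x y. f x y * g x y)"
  unfolding bipoly_fun_def by (metis beval_mult)

lemma bipoly_fun_pochhammer: "bipoly_fun f \<Longrightarrow> bipoly_fun (\<lambda>x y. pochhammer (f x y) m)"
proof (induction m)
  case 0
  show ?case by (simp add: bipoly_fun_const)
next
  case (Suc m)
  then show ?case
    unfolding pochhammer_Suc by (intro bipoly_fun_mult bipoly_fun_add bipoly_fun_const)
qed

lemma bipoly_fun_sum:
  fixes m :: nat
  assumes "\<And>j. bipoly_fun (g j)"
  shows "bipoly_fun (\<lambda>x y. \<Sum>j\<le>m. g j x y)"
  using assms by (induction m) (auto intro: bipoly_fun_add)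

lemmas bipoly_fun_intros =
  bipoly_fun_const bipoly_fun_fst bipoly_fun_snd bipoly_fun_add bipoly_fun_mult
  bipoly_fun_pochhammer bipoly_fun_sum

lemma bipoly_fun_beta_shift_factor:
  "bipoly_fun f \<Longrightarrow> bipoly_fun g \<Longrightarrow> bipoly_fun (\<lambda>x y. beta_shift_factor z q (f x y) (g x y))"
  unfolding beta_shift_factor_def by (intro bipoly_fun_intros)

lemma pochhammer_affine_bipoly:
  fixes a b c :: complex
  assumes "b \<noteq> 0 \<or> a \<noteq> 0 \<or> m = 0"
  shows "\<exists>D. D \<noteq> 0 \<and> (\<forall>x y. beval D x y = pochhammer (c + a * x + b * y) m)"
proof -
  have "bipoly_fun (\<lambda>x y. pochhammer (c + a * x + b * y) m)"
    by (intro bipoly_fun_intros)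
  then obtain D where D: "\<And>x y. beval D x y = pochhammer (c + a * x + b * y) m"
    unfolding bipoly_fun_def by blast
  have "D \<noteq> 0"
  proof (cases "b = 0")
    case False
    then show ?thesis using D[of 0 "(1 - c) / b"] pochhammer_1_nonzero by auto
  next
    case True
    then show ?thesis
      using assms D[of "(1 - c) / a" 0] D[of 0 0] pochhammer_1_nonzero by (cases "a = 0") auto
  qed
  with D show ?thesis by blast
qed

(* Chaining the three relations gives P' R S G' = P R' S' G; when S = 0 this is useless,
   but then also S' = 0 and P' G' = 0 directly. *)

lemma hypergeometric_ratio_certificate:
  fixes G G' H H' :: "int \<Rightarrow> int \<Rightarrow> complex" and P P' S S' R R' :: "complex poly poly"
  assumes "P' \<noteq> 0" "R \<noteq> 0"
    and S'_zero: "\<And>x y. S = 0 \<Longrightarrow> beval S' x y = 0"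
    and G: "\<And>n k. good n k \<Longrightarrow> G n k * beval P (of_int n) (of_int k) = H n k * beval S (of_int n) (of_int k)"
    and G': "\<And>n k. good n k \<Longrightarrow> G' n k * beval P' (of_int n) (of_int k) = H' n k * beval S' (of_int n) (of_int k)"
    and H: "\<And>n k. good n k \<Longrightarrow> H' n k * beval R (of_int n) (of_int k) = H n k * beval R' (of_int n) (of_int k)"
  shows "\<exists>p q. q \<noteq> 0 \<and> (\<forall>n k. good n k \<longrightarrow>
           beval q (of_int n) (of_int k) * G' n k = beval p (of_int n) (of_int k) * G n k)"
proof (cases "S = 0")
  case True
  show ?thesis
  proof (intro exI conjI allI impI)
    fix n k assume "good n k"
    then show "beval P' (of_int n) (of_int k) * G' n k = beval 0 (of_int n) (of_int k) * G n k"
      using G' S'_zero[OF True] by (simp add: mult.commute)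
  qed fact
next
  case False
  show ?thesis
  proof (intro exI conjI allI impI)
    show "P' * R * S \<noteq> 0" using assms(1,2) False by simp
    fix n k assume good: "good n k"
    define ev where "ev T = beval T (of_int n) (of_int k)" for T
    have "ev (P' * R * S) * G' n k = (G' n k * ev P') * ev R * ev S"
      by (simp add: ev_def beval_mult ac_simps)
    also have "\<dots> = (H' n k * ev R) * ev S' * ev S"
      using G'[OF good] by (simp add: ev_def ac_simps)
    also have "\<dots> = (G n k * ev P) * ev R' * ev S'"
      using G[OF good] H[OF good] by (simp add: ev_def ac_simps)
    also have "\<dots> = ev (P * R' * S') * G n k"
      by (simp add: ev_def beval_mult ac_simps)
    finally show "beval (P' * R * S) (of_int n) (of_int k) * G' n k
        = beval (P * R' * S') (of_int n) (of_int k) * G n k"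
      unfolding ev_def .
  qed
qed

lemma beta_shift_affine_closed_form:
  fixes Q :: "complex poly" and cu cd :: complex and M N :: int
  assumes "exp Lz = z"
  shows "\<exists>P S. P \<noteq> 0
    \<and> (\<forall>x y. beval S x y = beta_shift_factor z Q (cu + of_int M * x + y) (cd + of_int N * x))
    \<and> (\<forall>n k. cu + of_int (M * n + k) \<notin> \<int>\<^sub>\<le>\<^sub>0 \<longrightarrow>
      beta_shift Lz Lz1 Q (cu + of_int (M * n + k)) (cd + of_int (N * n)) * beval P (of_int n) (of_int k)
      = beta_kernel Lz Lz1 (cu + of_int (M * n + k)) (cd + of_int (N * n)) * beval S (of_int n) (of_int k))"
proof -
  obtain P where "P \<noteq> 0"
    and P: "\<forall>x y. beval P x y = pochhammer (cu + cd + of_int (M + N) * x + y) (degree Q)"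
    using pochhammer_affine_bipoly[where b = 1, simplified] by blast
  have "bipoly_fun (\<lambda>x y. beta_shift_factor z Q (cu + of_int M * x + y) (cd + of_int N * x))"
    by (intro bipoly_fun_beta_shift_factor bipoly_fun_intros)
  then obtain S where S: "\<forall>x y. beval S x y = beta_shift_factor z Q (cu + of_int M * x + y) (cd + of_int N * x)"
    unfolding bipoly_fun_def by blast
  have "beta_shift Lz Lz1 Q (cu + of_int (M * n + k)) (cd + of_int (N * n)) * beval P (of_int n) (of_int k)
      = beta_kernel Lz Lz1 (cu + of_int (M * n + k)) (cd + of_int (N * n)) * beval S (of_int n) (of_int k)"
    if "cu + of_int (M * n + k) \<notin> \<int>\<^sub>\<le>\<^sub>0" for n k
    using beta_shift_closed_form[OF assms that, of Lz1 Q "cd + of_int (N * n)"] by (simp add: P S algebra_simps)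
  with \<open>P \<noteq> 0\<close> S show ?thesis by blast
qed

lemma beta_kernel_affine_ratio_k:
  fixes cu cd :: complex and M N :: int
  assumes "exp Lz = z"
  shows "\<exists>R R'. R \<noteq> 0 \<and> (\<forall>n k. cu + of_int (M * n + k) \<notin> \<int>\<^sub>\<le>\<^sub>0 \<longrightarrow>
    beta_kernel Lz Lz1 (cu + 1 + of_int (M * n + k)) (cd + of_int (N * n)) * beval R (of_int n) (of_int k)
    = beta_kernel Lz Lz1 (cu + of_int (M * n + k)) (cd + of_int (N * n)) * beval R' (of_int n) (of_int k))"
proof -
  obtain R where "R \<noteq> 0"
    and R: "\<forall>x y. beval R x y = pochhammer (cu + cd + of_int (M + N) * x + y) 1"
    using pochhammer_affine_bipoly[where b = 1, simplified] by blast
  have "bipoly_fun (\<lambda>x y. z * (cu + of_int M * x + y))"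
    by (intro bipoly_fun_intros)
  then obtain R' where R': "\<forall>x y. beval R' x y = z * (cu + of_int M * x + y)"
    unfolding bipoly_fun_def by blast
  have "beta_kernel Lz Lz1 (cu + 1 + of_int (M * n + k)) (cd + of_int (N * n)) * beval R (of_int n) (of_int k)
    = beta_kernel Lz Lz1 (cu + of_int (M * n + k)) (cd + of_int (N * n)) * beval R' (of_int n) (of_int k)"
    if "cu + of_int (M * n + k) \<notin> \<int>\<^sub>\<le>\<^sub>0" for n k
    using beta_kernel_shift_nat[OF assms that, of 1 1 Lz1 "cd + of_int (N * n)"]
    by (simp add: R R' algebra_simps)
  with \<open>R \<noteq> 0\<close> show ?thesis by blast
qed

(* With u = cu + (M n + k) and d = cd + N n: for M < 0 or N < 0 the shifted points u + M, d + N
   are not covered by the hypotheses on u and d; the condition that D does not vanish there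
   excludes their poles. *)

lemma beta_kernel_affine_ratio_n:
  fixes cu cd :: complex and M N :: int
  shows "\<exists>D R R'. D \<noteq> 0 \<and> R \<noteq> 0 \<and> (\<forall>n k. beval D (of_int n) (of_int k) \<noteq> 0
    \<and> cu + of_int (M * n + k) \<notin> \<int>\<^sub>\<le>\<^sub>0 \<and> cd + of_int (N * n) \<notin> \<int>\<^sub>\<le>\<^sub>0 \<longrightarrow>
    cu + of_int M + of_int (M * n + k) \<notin> \<int>\<^sub>\<le>\<^sub>0 \<and>
    beta_kernel Lz Lz1 (cu + of_int M + of_int (M * n + k)) (cd + of_int N + of_int (N * n))
      * beval R (of_int n) (of_int k)
    = beta_kernel Lz Lz1 (cu + of_int (M * n + k)) (cd + of_int (N * n)) * beval R' (of_int n) (of_int k))"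
proof -
  obtain D1 where "D1 \<noteq> 0"
    and D1: "\<forall>x y. beval D1 x y = pochhammer (cu + of_int M + of_int M * x + y) (nat (- M))"
    using pochhammer_affine_bipoly[where b = 1, simplified] by blast
  obtain D2 where "D2 \<noteq> 0"
    and D2: "\<forall>x y. beval D2 x y = pochhammer (cd + of_int N + of_int N * x) (nat (- N))"
  proof -
    have "0 \<noteq> (0 :: complex) \<or> of_int N \<noteq> (0 :: complex) \<or> nat (- N) = 0" by auto
    from pochhammer_affine_bipoly[OF this] show ?thesis using that by auto
  qed
  obtain D3 where "D3 \<noteq> 0"
    and D3: "\<forall>x y. beval D3 x y = pochhammer (cu + cd + of_int (M + N) * x + y) (nat (M + N))"
    using pochhammer_affine_bipoly[where b = 1, simplified] by blast
  have "bipoly_fun (\<lambda>x y. exp (of_int (M + N) * Lz) * exp (- of_int N * Lz1)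
      * pochhammer (cu + of_int M * x + y) (nat M) * pochhammer (cd + of_int N * x) (nat N)
      * pochhammer (cu + of_int M * x + y + (cd + of_int N * x) + of_int (M + N)) (nat (- (M + N))))"
    by (intro bipoly_fun_intros)
  then obtain R' where R': "\<forall>x y. beval R' x y = exp (of_int (M + N) * Lz) * exp (- of_int N * Lz1)
      * pochhammer (cu + of_int M * x + y) (nat M) * pochhammer (cd + of_int N * x) (nat N)
      * pochhammer (cu + of_int M * x + y + (cd + of_int N * x) + of_int (M + N)) (nat (- (M + N)))"
    unfolding bipoly_fun_def by blast
  have "cu + of_int M + of_int (M * n + k) \<notin> \<int>\<^sub>\<le>\<^sub>0 \<and>
    beta_kernel Lz Lz1 (cu + of_int M + of_int (M * n + k)) (cd + of_int N + of_int (N * n))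
      * beval (D1 * D2 * D3) (of_int n) (of_int k)
    = beta_kernel Lz Lz1 (cu + of_int (M * n + k)) (cd + of_int (N * n)) * beval R' (of_int n) (of_int k)"
    if good: "beval (D1 * D2) (of_int n) (of_int k) \<noteq> 0"
      "cu + of_int (M * n + k) \<notin> \<int>\<^sub>\<le>\<^sub>0" "cd + of_int (N * n) \<notin> \<int>\<^sub>\<le>\<^sub>0" for n k
  proof -
    have "pochhammer (cu + of_int (M * n + k) + of_int M) (nat (- M)) \<noteq> 0"
      and "pochhammer (cd + of_int (N * n) + of_int N) (nat (- N)) \<noteq> 0"
      using good(1) by (simp_all add: beval_mult D1 D2 algebra_simps)
    then have u_M: "cu + of_int (M * n + k) + of_int M \<notin> \<int>\<^sub>\<le>\<^sub>0"
      and d_N: "cd + of_int (N * n) + of_int N \<notin> \<int>\<^sub>\<le>\<^sub>0"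
      using good(2,3) plus_of_int_notin_nonpos_Ints_pochhammer by blast+
    then show ?thesis
      using beta_kernel_shift_int[OF good(2) u_M good(3) d_N, of Lz Lz1]
      by (simp add: beval_mult D1 D2 D3 R' algebra_simps)
  qed
  then show ?thesis using \<open>D1 \<noteq> 0\<close> \<open>D2 \<noteq> 0\<close> \<open>D3 \<noteq> 0\<close>
    by (intro exI[of _ "D1 * D2"] exI[of _ "D1 * D2 * D3"] exI[of _ R']) simp
qed

lemma beta_shift_ratio_k:
  fixes Q :: "complex poly" and Lz Lz1 z cu cd :: complex and M N :: int
  assumes "exp Lz = z"
  defines "G \<equiv> \<lambda>n k. beta_shift Lz Lz1 Q (cu + of_int (M * n + k)) (cd + of_int (N * n))"
  shows "\<exists>p q. q \<noteq> 0 \<and> (\<forall>n k. cu + of_int (M * n + k) \<notin> \<int>\<^sub>\<le>\<^sub>0 \<longrightarrow>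
           beval q (of_int n) (of_int k) * G n (k + 1) = beval p (of_int n) (of_int k) * G n k)"
proof -
  obtain P S where S: "\<forall>x y. beval S x y = beta_shift_factor z Q (cu + of_int M * x + y) (cd + of_int N * x)"
    and G: "\<forall>n k. cu + of_int (M * n + k) \<notin> \<int>\<^sub>\<le>\<^sub>0 \<longrightarrow>
      beta_shift Lz Lz1 Q (cu + of_int (M * n + k)) (cd + of_int (N * n)) * beval P (of_int n) (of_int k)
      = beta_kernel Lz Lz1 (cu + of_int (M * n + k)) (cd + of_int (N * n)) * beval S (of_int n) (of_int k)"
    using beta_shift_affine_closed_form[OF assms(1)] by blast
  obtain P' S' where "P' \<noteq> 0"
    and S': "\<forall>x y. beval S' x y = beta_shift_factor z Q (cu + 1 + of_int M * x + y) (cd + of_int N * x)"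
    and G': "\<forall>n k. cu + 1 + of_int (M * n + k) \<notin> \<int>\<^sub>\<le>\<^sub>0 \<longrightarrow>
      beta_shift Lz Lz1 Q (cu + 1 + of_int (M * n + k)) (cd + of_int (N * n)) * beval P' (of_int n) (of_int k)
      = beta_kernel Lz Lz1 (cu + 1 + of_int (M * n + k)) (cd + of_int (N * n)) * beval S' (of_int n) (of_int k)"
    using beta_shift_affine_closed_form[OF assms(1)] by blast
  obtain R R' where "R \<noteq> 0" and H: "\<forall>n k. cu + of_int (M * n + k) \<notin> \<int>\<^sub>\<le>\<^sub>0 \<longrightarrow>
    beta_kernel Lz Lz1 (cu + 1 + of_int (M * n + k)) (cd + of_int (N * n)) * beval R (of_int n) (of_int k)
    = beta_kernel Lz Lz1 (cu + of_int (M * n + k)) (cd + of_int (N * n)) * beval R' (of_int n) (of_int k)"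
    using beta_kernel_affine_ratio_k[OF assms(1)] by blast
  show ?thesis
  proof (rule hypergeometric_ratio_certificate[where P = P and P' = P' and S = S and S' = S' and R = R and R' = R'
      and H = "\<lambda>n k. beta_kernel Lz Lz1 (cu + of_int (M * n + k)) (cd + of_int (N * n))"
      and H' = "\<lambda>n k. beta_kernel Lz Lz1 (cu + 1 + of_int (M * n + k)) (cd + of_int (N * n))"])
    show "beval S' x y = 0" if "S = 0" for x y
      using S[rule_format, of x "y + 1"] S'[rule_format, of x y] that by (simp add: ac_simps)
    fix n k
    assume nonpole: "cu + of_int (M * n + k) \<notin> \<int>\<^sub>\<le>\<^sub>0"
    then show "G n k * beval P (of_int n) (of_int k)
      = beta_kernel Lz Lz1 (cu + of_int (M * n + k)) (cd + of_int (N * n)) * beval S (of_int n) (of_int k)"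
      using G by (simp add: G_def)
    have "G n (k + 1) = beta_shift Lz Lz1 Q (cu + 1 + of_int (M * n + k)) (cd + of_int (N * n))"
      by (simp add: G_def ac_simps)
    moreover have "cu + 1 + of_int (M * n + k) \<notin> \<int>\<^sub>\<le>\<^sub>0"
      using plus_of_nat_notin_nonpos_Ints[OF nonpole, of 1] by (simp add: ac_simps)
    ultimately show "G n (k + 1) * beval P' (of_int n) (of_int k)
      = beta_kernel Lz Lz1 (cu + 1 + of_int (M * n + k)) (cd + of_int (N * n)) * beval S' (of_int n) (of_int k)"
      using G' by simp
    show "beta_kernel Lz Lz1 (cu + 1 + of_int (M * n + k)) (cd + of_int (N * n)) * beval R (of_int n) (of_int k)
      = beta_kernel Lz Lz1 (cu + of_int (M * n + k)) (cd + of_int (N * n)) * beval R' (of_int n) (of_int k)"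
      using H nonpole by simp
  qed fact+
qed

lemma beta_shift_ratio_n:
  fixes Q :: "complex poly" and Lz Lz1 z cu cd :: complex and M N :: int
  assumes "exp Lz = z"
  defines "G \<equiv> \<lambda>n k. beta_shift Lz Lz1 Q (cu + of_int (M * n + k)) (cd + of_int (N * n))"
  shows "\<exists>D p q. D \<noteq> 0 \<and> q \<noteq> 0 \<and> (\<forall>n k. beval D (of_int n) (of_int k) \<noteq> 0
           \<and> cu + of_int (M * n + k) \<notin> \<int>\<^sub>\<le>\<^sub>0 \<and> cd + of_int (N * n) \<notin> \<int>\<^sub>\<le>\<^sub>0 \<longrightarrow>
           beval q (of_int n) (of_int k) * G (n + 1) k = beval p (of_int n) (of_int k) * G n k)"
proof -
  obtain P S where S: "\<forall>x y. beval S x y = beta_shift_factor z Q (cu + of_int M * x + y) (cd + of_int N * x)"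
    and G: "\<forall>n k. cu + of_int (M * n + k) \<notin> \<int>\<^sub>\<le>\<^sub>0 \<longrightarrow>
      beta_shift Lz Lz1 Q (cu + of_int (M * n + k)) (cd + of_int (N * n)) * beval P (of_int n) (of_int k)
      = beta_kernel Lz Lz1 (cu + of_int (M * n + k)) (cd + of_int (N * n)) * beval S (of_int n) (of_int k)"
    using beta_shift_affine_closed_form[OF assms(1)] by blast
  obtain P' S' where "P' \<noteq> 0"
    and S': "\<forall>x y. beval S' x y
      = beta_shift_factor z Q (cu + of_int M + of_int M * x + y) (cd + of_int N + of_int N * x)"
    and G': "\<forall>n k. cu + of_int M + of_int (M * n + k) \<notin> \<int>\<^sub>\<le>\<^sub>0 \<longrightarrow>
      beta_shift Lz Lz1 Q (cu + of_int M + of_int (M * n + k)) (cd + of_int N + of_int (N * n))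
        * beval P' (of_int n) (of_int k)
      = beta_kernel Lz Lz1 (cu + of_int M + of_int (M * n + k)) (cd + of_int N + of_int (N * n))
        * beval S' (of_int n) (of_int k)"
    using beta_shift_affine_closed_form[OF assms(1)] by blast
  obtain D R R' where "D \<noteq> 0" "R \<noteq> 0" and H: "\<forall>n k. beval D (of_int n) (of_int k) \<noteq> 0
    \<and> cu + of_int (M * n + k) \<notin> \<int>\<^sub>\<le>\<^sub>0 \<and> cd + of_int (N * n) \<notin> \<int>\<^sub>\<le>\<^sub>0 \<longrightarrow>
    cu + of_int M + of_int (M * n + k) \<notin> \<int>\<^sub>\<le>\<^sub>0 \<and>
    beta_kernel Lz Lz1 (cu + of_int M + of_int (M * n + k)) (cd + of_int N + of_int (N * n))
      * beval R (of_int n) (of_int k)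
    = beta_kernel Lz Lz1 (cu + of_int (M * n + k)) (cd + of_int (N * n)) * beval R' (of_int n) (of_int k)"
    using beta_kernel_affine_ratio_n by blast
  have "\<exists>p q. q \<noteq> 0 \<and> (\<forall>n k. beval D (of_int n) (of_int k) \<noteq> 0
      \<and> cu + of_int (M * n + k) \<notin> \<int>\<^sub>\<le>\<^sub>0 \<and> cd + of_int (N * n) \<notin> \<int>\<^sub>\<le>\<^sub>0 \<longrightarrow>
      beval q (of_int n) (of_int k) * G (n + 1) k = beval p (of_int n) (of_int k) * G n k)"
  proof (rule hypergeometric_ratio_certificate[where P = P and P' = P' and S = S and S' = S' and R = R and R' = R'
      and H = "\<lambda>n k. beta_kernel Lz Lz1 (cu + of_int (M * n + k)) (cd + of_int (N * n))"
      and H' = "\<lambda>n k. beta_kernel Lz Lz1 (cu + of_int M + of_int (M * n + k)) (cd + of_int N + of_int (N * n))"])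
    show "beval S' x y = 0" if "S = 0" for x y
      using S[rule_format, of "x + 1" y] S'[rule_format, of x y] that by (simp add: algebra_simps)
    fix n k
    assume good: "beval D (of_int n) (of_int k) \<noteq> 0
      \<and> cu + of_int (M * n + k) \<notin> \<int>\<^sub>\<le>\<^sub>0 \<and> cd + of_int (N * n) \<notin> \<int>\<^sub>\<le>\<^sub>0"
    then show "G n k * beval P (of_int n) (of_int k)
      = beta_kernel Lz Lz1 (cu + of_int (M * n + k)) (cd + of_int (N * n)) * beval S (of_int n) (of_int k)"
      using G by (simp add: G_def)
    have "G (n + 1) k
        = beta_shift Lz Lz1 Q (cu + of_int M + of_int (M * n + k)) (cd + of_int N + of_int (N * n))"
      by (simp add: G_def algebra_simps)
    then show "G (n + 1) k * beval P' (of_int n) (of_int k)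
      = beta_kernel Lz Lz1 (cu + of_int M + of_int (M * n + k)) (cd + of_int N + of_int (N * n))
        * beval S' (of_int n) (of_int k)"
      using G' H good by simp
    show "beta_kernel Lz Lz1 (cu + of_int M + of_int (M * n + k)) (cd + of_int N + of_int (N * n))
        * beval R (of_int n) (of_int k)
      = beta_kernel Lz Lz1 (cu + of_int (M * n + k)) (cd + of_int (N * n)) * beval R' (of_int n) (of_int k)"
      using H good by simp
  qed fact+
  then show ?thesis using \<open>D \<noteq> 0\<close> by blast
qed

section \<open>The WZ mate of the seed\<close>

definition seed_mate_poly :: "complex \<Rightarrow> int \<Rightarrow> int \<Rightarrow> complex poly" where
  "seed_mate_poly z M N =
     (monom 1 (nat M) * contiguous_poly z ^ nat N - monom 1 (nat (- M)) * contiguous_poly z ^ nat (- N))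
     div [:-1, 1:]"

(* The base point takes the smaller of the values of u (resp. d) at n and n + 1, so that
   both F(n, k) and F(n + 1, k) are nonnegative shifts of the kernel there. *)

definition seed_mate ::
    "complex \<Rightarrow> complex \<Rightarrow> complex \<Rightarrow> int \<Rightarrow> int \<Rightarrow> int \<Rightarrow> complex \<Rightarrow> complex \<Rightarrow> complex \<Rightarrow> int \<Rightarrow> int \<Rightarrow> complex"
  where
  "seed_mate z Lz Lz1 K A B k0 a b n k = beta_shift Lz Lz1 (seed_mate_poly z (K + A) (B - A))
     (k0 + a + of_int (min 0 (K + A)) + of_int ((K + A) * n + k))
     (b - a + of_int (min 0 (B - A)) + of_int ((B - A) * n))"

lemma not_seed_bad_nonpoles:
  assumes "\<not> seed_bad K A B k0 a b n k"
  shows "k0 + a + of_int (min 0 (K + A)) + of_int ((K + A) * n + k) \<notin> \<int>\<^sub>\<le>\<^sub>0"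
    and "b - a + of_int (min 0 (B - A)) + of_int ((B - A) * n) \<notin> \<int>\<^sub>\<le>\<^sub>0"
proof -
  have "of_int (A * (n + i)) + a + (of_int (K * (n + i)) + k0 + of_int (k + 0)) \<notin> \<int>\<^sub>\<le>\<^sub>0
      \<and> of_int (B * (n + i)) + b - (of_int (A * (n + i)) + a) \<notin> \<int>\<^sub>\<le>\<^sub>0" if "i \<in> {0, 1}" for i
    using assms that unfolding seed_bad_def Let_def by blast
  from this[of 0] this[of 1] show
    "k0 + a + of_int (min 0 (K + A)) + of_int ((K + A) * n + k) \<notin> \<int>\<^sub>\<le>\<^sub>0"
    "b - a + of_int (min 0 (B - A)) + of_int ((B - A) * n) \<notin> \<int>\<^sub>\<le>\<^sub>0"
    by (auto simp: min_def algebra_simps)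
qed

lemma of_int_min_0_plus_of_nat_nat:
  "of_int (min 0 M) + of_nat (nat (- M)) = (0 :: 'a :: ring_1)"
  "of_int (min 0 M) + of_nat (nat M) = (of_int M :: 'a :: ring_1)"
  by (cases "M \<ge> 0"; simp)+

lemma seed_mate_wz_equation:
  assumes "exp Lz = z" "exp Lz1 = z - 1" "z \<noteq> 1" "\<not> seed_bad K A B k0 a b n k"
  defines "F \<equiv> \<lambda>n k. F0 Lz Lz1 (of_int (K * n) + k0 + of_int k) (of_int (A * n) + a) (of_int (B * n) + b)"
  shows "F (n + 1) k - F n k = seed_mate z Lz Lz1 K A B k0 a b n (k + 1) - seed_mate z Lz Lz1 K A B k0 a b n k"
proof -
  define M N where "M = K + A" and "N = B - A"
  define u d where "u = k0 + a + of_int (min 0 M) + of_int (M * n + k)"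
    and "d = b - a + of_int (min 0 N) + of_int (N * n)"
  have F_eq: "F m k = beta_kernel Lz Lz1 (k0 + a + of_int (M * m + k)) (b - a + of_int (N * m))" for m
    by (simp add: F_def F0_eq_beta_kernel M_def N_def algebra_simps)
  have "u + of_nat (nat (- M)) = k0 + a + of_int (M * n + k) + (of_int (min 0 M) + of_nat (nat (- M)))"
    and "d + of_nat (nat (- N)) = b - a + of_int (N * n) + (of_int (min 0 N) + of_nat (nat (- N)))"
    and "u + of_nat (nat M) = k0 + a + of_int (M * n + k) + (of_int (min 0 M) + of_nat (nat M))"
    and "d + of_nat (nat N) = b - a + of_int (N * n) + (of_int (min 0 N) + of_nat (nat N))"
    unfolding u_def d_def by (simp_all only: ac_simps)
  then have "F n k = beta_kernel Lz Lz1 (u + of_nat (nat (- M))) (d + of_nat (nat (- N)))"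
    and "F (n + 1) k = beta_kernel Lz Lz1 (u + of_nat (nat M)) (d + of_nat (nat N))"
    unfolding F_eq by (simp_all only: of_int_min_0_plus_of_nat_nat) (simp_all add: algebra_simps)
  moreover have "seed_mate z Lz Lz1 K A B k0 a b n (k + 1) = beta_shift Lz Lz1 (seed_mate_poly z M N) (u + 1) d"
    and "seed_mate z Lz Lz1 K A B k0 a b n k = beta_shift Lz Lz1 (seed_mate_poly z M N) u d"
    by (simp_all add: seed_mate_def M_def N_def u_def d_def algebra_simps)
  moreover have "u \<notin> \<int>\<^sub>\<le>\<^sub>0" "d \<notin> \<int>\<^sub>\<le>\<^sub>0"
    using not_seed_bad_nonpoles[OF assms(4)] by (simp_all add: u_def d_def M_def N_def)
  ultimately show ?thesis
    unfolding seed_mate_poly_def by (simp add: beta_kernel_shift_diff_telescopes[OF assms(1-3)])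
qed

lemma seed_mate_hypergeometric:
  fixes K A B :: int and z Lz Lz1 k0 a b :: complex
  assumes "exp Lz = z"
  defines "G \<equiv> seed_mate z Lz Lz1 K A B k0 a b"
  shows "\<exists>D p1 q1 p2 q2. D \<noteq> 0 \<and> q1 \<noteq> 0 \<and> q2 \<noteq> 0 \<and>
    (\<forall>n k. beval D (of_int n) (of_int k) \<noteq> 0 \<and> \<not> seed_bad K A B k0 a b n k \<longrightarrow>
      beval q1 (of_int n) (of_int k) * G (n + 1) k = beval p1 (of_int n) (of_int k) * G n k \<and>
      beval q2 (of_int n) (of_int k) * G n (k + 1) = beval p2 (of_int n) (of_int k) * G n k)"
proof -
  have G_eq: "G n k = beta_shift Lz Lz1 (seed_mate_poly z (K + A) (B - A))
      (k0 + a + of_int (min 0 (K + A)) + of_int ((K + A) * n + k))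
      (b - a + of_int (min 0 (B - A)) + of_int ((B - A) * n))" for n k
    by (simp add: G_def seed_mate_def)
  obtain D p1 q1 where "D \<noteq> 0" "q1 \<noteq> 0" and ratio_n: "\<forall>n k. beval D (of_int n) (of_int k) \<noteq> 0
      \<and> k0 + a + of_int (min 0 (K + A)) + of_int ((K + A) * n + k) \<notin> \<int>\<^sub>\<le>\<^sub>0
      \<and> b - a + of_int (min 0 (B - A)) + of_int ((B - A) * n) \<notin> \<int>\<^sub>\<le>\<^sub>0 \<longrightarrow>
      beval q1 (of_int n) (of_int k) * G (n + 1) k = beval p1 (of_int n) (of_int k) * G n k"
    using beta_shift_ratio_n[OF assms(1), where Q = "seed_mate_poly z (K + A) (B - A)" and ?Lz1.0 = Lz1]
    unfolding G_eq by blast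
  obtain p2 q2 where "q2 \<noteq> 0" and ratio_k: "\<forall>n k.
      k0 + a + of_int (min 0 (K + A)) + of_int ((K + A) * n + k) \<notin> \<int>\<^sub>\<le>\<^sub>0 \<longrightarrow>
      beval q2 (of_int n) (of_int k) * G n (k + 1) = beval p2 (of_int n) (of_int k) * G n k"
    using beta_shift_ratio_k[OF assms(1), where Q = "seed_mate_poly z (K + A) (B - A)" and ?Lz1.0 = Lz1]
    unfolding G_eq by blast
  show ?thesis
  proof (rule exI[of _ D], rule exI[of _ p1], rule exI[of _ q1], rule exI[of _ p2], rule exI[of _ q2],
      intro conjI allI impI)
    fix n k
    assume good: "beval D (of_int n) (of_int k) \<noteq> 0 \<and> \<not> seed_bad K A B k0 a b n k"
    note nonpoles = not_seed_bad_nonpoles[OF conjunct2[OF good]]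
    show "beval q1 (of_int n) (of_int k) * G (n + 1) k = beval p1 (of_int n) (of_int k) * G n k"
      using ratio_n good nonpoles by blast
    show "beval q2 (of_int n) (of_int k) * G n (k + 1) = beval p2 (of_int n) (of_int k) * G n k"
      using ratio_k nonpoles by blast
  qed fact+
qed

theorem theorem1:
  fixes z Lz Lz1 :: complex
  assumes "z \<noteq> 0" and "z \<noteq> 1" and "exp Lz = z" and "exp Lz1 = z - 1"
  shows "\<forall>K A B :: int. \<forall>k0 a b :: complex. \<exists>G.
           wz_mate (\<lambda>n k. F0 Lz Lz1 (of_int (K * n) + k0 + of_int k) (of_int (A * n) + a) (of_int (B * n) + b))
                   G (seed_bad K A B k0 a b)"
proof (intro allI)
  \<comment> \<open>The hypothesis z \<noteq> 0 is implied by exp Lz = z.\<close>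
  fix K A B :: int and k0 a b :: complex
  let ?F = "\<lambda>n k. F0 Lz Lz1 (of_int (K * n) + k0 + of_int k) (of_int (A * n) + a) (of_int (B * n) + b)"
  let ?G = "seed_mate z Lz Lz1 K A B k0 a b"
  obtain D p1 q1 p2 q2 where "D \<noteq> 0" "q1 \<noteq> 0" "q2 \<noteq> 0" and ratios:
    "\<forall>n k. beval D (of_int n) (of_int k) \<noteq> 0 \<and> \<not> seed_bad K A B k0 a b n k \<longrightarrow>
      beval q1 (of_int n) (of_int k) * ?G (n + 1) k = beval p1 (of_int n) (of_int k) * ?G n k \<and>
      beval q2 (of_int n) (of_int k) * ?G n (k + 1) = beval p2 (of_int n) (of_int k) * ?G n k"
    using seed_mate_hypergeometric[OF assms(3), where ?Lz1.0 = Lz1 and K = K and A = A and B = B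
        and ?k0.0 = k0 and a = a and b = b] by blast
  show "\<exists>G. wz_mate ?F G (seed_bad K A B k0 a b)"
    unfolding wz_mate_def
  proof (rule exI[of _ ?G], rule exI[of _ D], rule exI[of _ p1], rule exI[of _ q1], rule exI[of _ p2],
      rule exI[of _ q2], intro conjI allI impI)
    fix n k
    assume good: "beval D (of_int n) (of_int k) \<noteq> 0 \<and> \<not> seed_bad K A B k0 a b n k"
    then show "?F (n + 1) k - ?F n k = ?G n (k + 1) - ?G n k"
      using seed_mate_wz_equation[OF assms(3,4,2)] by simp
    show "beval q1 (of_int n) (of_int k) * ?G (n + 1) k = beval p1 (of_int n) (of_int k) * ?G n k"
      and "beval q2 (of_int n) (of_int k) * ?G n (k + 1) = beval p2 (of_int n) (of_int k) * ?G n k"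
      using ratios good by blast+
  qed fact+
qed

end
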